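(* Let $v$ be a node of degree $d\ge1$ in an undirected graph, and let $\epsilon\in(0,1)$, $\delta\in(0,1)$. Suppose $\ell$ independent traces of the cascade process with $p=1$ and known rate $\lambda>0$ start from $v$, and for trace $i$ let $t_i$ be the difference between the infection time of the second node of the trace and that of $v$. Let $T=\sum_{i=1}^{\ell}t_i$ and let the degree algorithm return $\hat d=\frac{\ell}{T\lambda}$. There is an absolute constant $C$ such that if $\ell\ge C\frac{\ln\delta^{-1}}{\epsilon^2}$, then $\Pr\left[|\hat d-d|\le\epsilon d\right]\ge1-\delta$.
   Context: Cascade process with $p=1$ and rate $\lambda$ from source $v$: every edge receives an independent length drawn from $\mathrm{Exp}(\lambda)$ (rate $\lambda$); the infection time of each node is its shortest-path distance from $v$ (so $v$ has infection time $0$); the trace lists the nodes in increasing order of infection time with their times. *)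

theory Defs
  imports "HOL-Probability.Probability"
begin

definition ugraph :: "nat set \<Rightarrow> nat set set \<Rightarrow> bool" where
  "ugraph V E \<longleftrightarrow> finite V \<and> (\<forall>e\<in>E. e \<subseteq> V \<and> card e = 2)"

definition degree :: "nat set set \<Rightarrow> nat \<Rightarrow> nat" where
  "degree E v = card {u. {v, u} \<in> E}"

fun is_walk :: "nat set set \<Rightarrow> nat list \<Rightarrow> bool" where
  "is_walk E [] = False"
| "is_walk E [u] = True"
| "is_walk E (u # w # ws) = ({u, w} \<in> E \<and> is_walk E (w # ws))"

fun walk_len :: "(nat set \<Rightarrow> real) \<Rightarrow> nat list \<Rightarrow> real" where
  "walk_len L [] = 0"
| "walk_len L [u] = 0"
| "walk_len L (u # w # ws) = L {u, w} + walk_len L (w # ws)"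

definition reachable :: "nat set set \<Rightarrow> nat \<Rightarrow> nat \<Rightarrow> bool" where
  "reachable E v u \<longleftrightarrow> (\<exists>p. is_walk E p \<and> hd p = v \<and> last p = u)"

definition infection_time :: "nat set set \<Rightarrow> (nat set \<Rightarrow> real) \<Rightarrow> nat \<Rightarrow> nat \<Rightarrow> real" where
  "infection_time E L v u =
     Inf {walk_len L p | p. is_walk E p \<and> hd p = v \<and> last p = u}"

text \<open>Infection time of the second node of the trace minus that of the source v
 (the trace lists infected nodes by increasing infection time; the second node is the
 infected node other than v with the smallest infection time).\<close>
definition second_gap :: "nat set set \<Rightarrow> (nat set \<Rightarrow> real) \<Rightarrow> nat \<Rightarrow> real" where
  "second_gap E L v =
     Min (infection_time E L v ` {u. u \<noteq> v \<and> reachable E v u}) - infection_time E L v v"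

text \<open>Probability space of l independent traces: trace i uses independent
 Exp(lam) edge lengths \<omega> i e for every edge e.\<close>
definition cascade_space :: "nat set set \<Rightarrow> real \<Rightarrow> nat \<Rightarrow> (nat \<Rightarrow> nat set \<Rightarrow> real) measure" where
  "cascade_space E lam l =
     PiM {..<l} (\<lambda>i. PiM E (\<lambda>e. density lborel (exponential_density lam)))"

definition degree_estimate :: "nat set set \<Rightarrow> real \<Rightarrow> nat \<Rightarrow> nat \<Rightarrow> (nat \<Rightarrow> nat set \<Rightarrow> real) \<Rightarrow> real" where
  "degree_estimate E lam l v \<omega> = real l / ((\<Sum>i<l. second_gap E (\<omega> i) v) * lam)"

end

theory Submission
  imports Defs
begin

text \<open>
  With nonnegative edge lengths the second node of a trace is reached through the shortest
  of the \<open>d\<close> edges at \<open>v\<close>, so each gap \<open>t\<^sub>i\<close> is a minimum of \<open>d\<close> independent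
  \<open>Exp(\<lambda>)\<close> variables, i.e. \<open>Exp(d\<lambda>)\<close>, and \<open>d\<lambda>T\<close> has the Erlang law \<open>Gamma(l, 1)\<close>.
  The estimate is \<open>\<epsilon>\<close>-accurate iff \<open>d\<lambda>T \<in> [l/(1+\<epsilon>), l/(1-\<epsilon>)]\<close>. If \<open>l\<epsilon>\<^sup>2\<close> is large,
  Chernoff bounds on both tails give failure probability \<open>2 exp(-l\<epsilon>\<^sup>2/32) \<le> \<delta>\<close>. If \<open>l\<epsilon>\<^sup>2\<close>
  is small, the hypothesis forces \<open>1 - \<delta> \<le> ln(1/\<delta>) \<le> l\<epsilon>\<^sup>2/C\<close>, while a Stirling-type lower
  bound on the Erlang density near its mode gives the interval probability of order
  \<open>\<epsilon>\<surd>l \<ge> l\<epsilon>\<^sup>2/8\<close>. Both cases work with \<open>C = 16 exp 67\<close>.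
\<close>

section \<open>Shortest paths and the second node of a trace\<close>

lemma ugraph_finite_edges: "ugraph V E \<Longrightarrow> finite E"
  unfolding ugraph_def by (meson Pow_iff finite_Pow_iff finite_subset subsetI)

lemma ugraph_incident_edge:
  assumes "ugraph V E" "e \<in> E" "v \<in> e"
  obtains u where "u \<noteq> v" "e = {v, u}"
proof -
  obtain x y where xy: "e = {x, y}" "x \<noteq> y"
    using assms by (auto simp: ugraph_def card_2_iff)
  thus ?thesis
    using assms(3) that by (metis doubleton_eq_iff insertE singletonD)
qed

lemma degree_eq_card_incident:
  assumes "ugraph V E"
  shows "degree E v = card {e \<in> E. v \<in> e}"
proof -
  have "{e \<in> E. v \<in> e} = (\<lambda>u. {v, u}) ` {u. {v, u} \<in> E}"
    by (auto elim: ugraph_incident_edge[OF assms])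
  moreover have "inj_on (\<lambda>u. {v, u}) {u. {v, u} \<in> E}"
    by (auto simp: inj_on_def doubleton_eq_iff)
  ultimately show ?thesis
    unfolding degree_def by (simp add: card_image)
qed

lemma walk_len_nonneg: "is_walk E p \<Longrightarrow> \<forall>e\<in>E. 0 \<le> L e \<Longrightarrow> 0 \<le> walk_len L p"
  by (induction E p rule: is_walk.induct) auto

lemma walk_last_in_vertices: "ugraph V E \<Longrightarrow> is_walk E p \<Longrightarrow> hd p \<in> V \<Longrightarrow> last p \<in> V"
  by (induction E p rule: is_walk.induct) (auto simp: ugraph_def)

lemma finite_reachable:
  assumes "ugraph V E" "v \<in> V"
  shows "finite {u. reachable E v u}"
proof (rule finite_subset)
  show "{u. reachable E v u} \<subseteq> V"
    using walk_last_in_vertices[OF assms(1)] assms(2) unfolding reachable_def by fastforce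
  show "finite V"
    using assms(1) by (simp add: ugraph_def)
qed

lemma walk_first_edge:
  assumes "is_walk E p" "hd p = v" "last p \<noteq> v"
  obtains w ws where "p = v # w # ws" "{v, w} \<in> E" "is_walk E (w # ws)"
  using assms by (cases "(E, p)" rule: is_walk.cases) auto

lemma bdd_below_walk_lengths:
  "\<forall>e\<in>E. 0 \<le> L e \<Longrightarrow> bdd_below {walk_len L p | p. is_walk E p \<and> hd p = v \<and> last p = u}"
  by (rule bdd_belowI[of _ 0]) (auto intro: walk_len_nonneg)

lemma infection_time_source:
  assumes "\<forall>e\<in>E. 0 \<le> L e"
  shows "infection_time E L v v = 0"
  unfolding infection_time_def
proof (rule cInf_eq_minimum)
  show "0 \<in> {walk_len L p | p. is_walk E p \<and> hd p = v \<and> last p = v}"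
    by (rule CollectI, rule exI[of _ "[v]"]) simp
qed (use walk_len_nonneg assms in auto)

lemma infection_time_le_edge:
  assumes "\<forall>e\<in>E. 0 \<le> L e" "{v, u} \<in> E"
  shows "infection_time E L v u \<le> L {v, u}"
  unfolding infection_time_def
proof (rule cInf_lower[OF _ bdd_below_walk_lengths[OF assms(1)]])
  show "L {v, u} \<in> {walk_len L p | p. is_walk E p \<and> hd p = v \<and> last p = u}"
    using assms(2) by (intro CollectI exI[of _ "[v, u]"]) simp
qed

lemma Min_incident_le_infection_time:
  assumes "finite E" "\<forall>e\<in>E. 0 \<le> L e" "reachable E v u" "u \<noteq> v"
  shows "Min (L ` {e \<in> E. v \<in> e}) \<le> infection_time E L v u"
  unfolding infection_time_def
proof (rule cInf_greatest)
  show "{walk_len L p | p. is_walk E p \<and> hd p = v \<and> last p = u} \<noteq> {}"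
    using assms(3) by (auto simp: reachable_def)
  fix x
  assume "x \<in> {walk_len L p | p. is_walk E p \<and> hd p = v \<and> last p = u}"
  then obtain p where p: "is_walk E p" "hd p = v" "last p = u" "x = walk_len L p"
    by auto
  have "last p \<noteq> v"
    using p(3) assms(4) by simp
  then obtain w ws where pw: "p = v # w # ws" "{v, w} \<in> E" "is_walk E (w # ws)"
    using walk_first_edge[OF p(1,2)] by blast
  have "Min (L ` {e \<in> E. v \<in> e}) \<le> L {v, w}"
    using assms(1) pw by (intro Min_le) auto
  also have "\<dots> \<le> walk_len L p"
    using pw walk_len_nonneg[OF pw(3) assms(2)] by simp
  finally show "Min (L ` {e \<in> E. v \<in> e}) \<le> x"
    using p by simp
qed

lemma second_gap_eq_Min_incident:
  assumes G: "ugraph V E" and v: "v \<in> V" "{e \<in> E. v \<in> e} \<noteq> {}" and L: "\<forall>e\<in>E. 0 \<le> L e"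
  shows "second_gap E L v = Min (L ` {e \<in> E. v \<in> e})"
proof -
  let ?m = "Min (L ` {e \<in> E. v \<in> e})"
  have finE: "finite E"
    using G by (rule ugraph_finite_edges)
  obtain e0 where e0: "e0 \<in> E" "v \<in> e0" "L e0 = ?m"
    using Min_in[of "L ` {e \<in> E. v \<in> e}"] finE v(2) by fastforce
  then obtain u0 where u0: "u0 \<noteq> v" "e0 = {v, u0}"
    using G by (elim ugraph_incident_edge)
  have reach: "reachable E v u0"
    unfolding reachable_def using e0 u0 by (intro exI[of _ "[v, u0]"]) auto
  have "infection_time E L v u0 = ?m"
    using infection_time_le_edge[OF L] Min_incident_le_infection_time[OF finE L reach u0(1)] e0 u0
    by fastforce
  hence "?m \<in> infection_time E L v ` {u. u \<noteq> v \<and> reachable E v u}"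
    using reach u0(1) by force
  hence "Min (infection_time E L v ` {u. u \<noteq> v \<and> reachable E v u}) = ?m"
    using finite_reachable[OF G v(1)] Min_incident_le_infection_time[OF finE L]
    by (intro Min_eqI) auto
  thus ?thesis
    unfolding second_gap_def infection_time_source[OF L] by simp
qed

section \<open>Distribution of the gaps\<close>

lemma measurable_walk_len:
  "is_walk E p \<Longrightarrow> (\<And>e. e \<in> E \<Longrightarrow> sets (M e) = sets borel)
    \<Longrightarrow> (\<lambda>L. walk_len L p) \<in> borel_measurable (PiM E M)"
proof (induction E p rule: is_walk.induct)
  case (3 E u w ws)
  have "(\<lambda>L. L {u, w}) \<in> measurable (PiM E M) (M {u, w})"
    using 3 by (intro measurable_component_singleton) simp
  moreover have "measurable (PiM E M) (M {u, w}) = borel_measurable (PiM E M)"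
    using 3 by (intro measurable_cong_sets) simp_all
  ultimately show ?case
    using 3 by simp
qed auto

lemma measurable_infection_time:
  assumes "\<And>e. e \<in> E \<Longrightarrow> sets (M e) = sets borel"
  shows "(\<lambda>L. infection_time E L v u) \<in> borel_measurable (PiM E M)"
proof -
  let ?W = "{p. is_walk E p \<and> hd p = v \<and> last p = u}"
  have "infection_time E L v u = (INF p\<in>?W. walk_len L p)" for L
    unfolding infection_time_def by (simp add: image_def setcompr_eq_image)
  moreover have "(\<lambda>L. INF p\<in>?W. walk_len L p) \<in> borel_measurable (PiM E M)"
    using assms by (intro borel_measurable_cINF_real measurable_walk_len) auto
  ultimately show ?thesis
    by simp
qed

lemma measurable_second_gap:
  assumes "ugraph V E" "v \<in> V" "\<And>e. e \<in> E \<Longrightarrow> sets (M e) = sets borel"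
  shows "(\<lambda>L. second_gap E L v) \<in> borel_measurable (PiM E M)"
  unfolding second_gap_def
  using finite_reachable[OF assms(1,2)] assms(3)
  by (intro borel_measurable_diff borel_measurable_Min measurable_infection_time) auto

lemma indep_vars_PiM_components:
  assumes "finite I" "I \<noteq> {}" and M: "\<And>i. i \<in> I \<Longrightarrow> prob_space (M i)"
  shows "prob_space.indep_vars (PiM I M) M (\<lambda>i \<omega>. \<omega> i) I"
proof -
  interpret P: prob_space "PiM I M"
    by (rule prob_space_PiM) (rule M)
  have "distr (PiM I M) (PiM I M) (\<lambda>\<omega>. \<lambda>i\<in>I. \<omega> i) = distr (PiM I M) (PiM I M) (\<lambda>\<omega>. \<omega>)"
    by (rule distr_cong) (auto simp: space_PiM PiE_def extensional_restrict)
  also have "\<dots> = PiM I (\<lambda>i. distr (PiM I M) (M i) (\<lambda>\<omega>. \<omega> i))"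
    by (auto simp: distr_id distr_PiM_component M intro: PiM_cong)
  finally show ?thesis
    using assms(2) by (subst P.indep_vars_iff_distr_eq_PiM') (auto intro: measurable_component_singleton)
qed

lemma distributed_PiM_component:
  assumes M: "\<And>i. i \<in> I \<Longrightarrow> prob_space (M i)" and i: "i \<in> I"
    and X: "distributed (M i) lborel X f"
  shows "distributed (PiM I M) lborel (\<lambda>\<omega>. X (\<omega> i)) f"
proof -
  have Xm: "X \<in> measurable (M i) lborel"
    using X by (simp add: distributed_def)
  have cm: "(\<lambda>\<omega>. \<omega> i) \<in> measurable (PiM I M) (M i)"
    using i by (rule measurable_component_singleton)
  have "distr (PiM I M) lborel (\<lambda>\<omega>. X (\<omega> i)) = distr (distr (PiM I M) (M i) (\<lambda>\<omega>. \<omega> i)) lborel X"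
    using Xm cm by (simp add: distr_distr comp_def)
  also have "\<dots> = distr (M i) lborel X"
    by (simp add: distr_PiM_component M i)
  finally show ?thesis
    using X measurable_comp[OF cm Xm] by (simp add: distributed_def comp_def)
qed

lemma distributed_density_id:
  assumes "f \<in> borel_measurable borel"
  shows "distributed (density lborel f) lborel (\<lambda>x. x) f"
  using assms unfolding distributed_def by (auto intro: distr_id2 measurable_ident_sets)

lemma distributed_AE_cong:
  assumes Y: "Y \<in> borel_measurable M" and eq: "AE x in M. Y x = X x" and X: "distributed M lborel X f"
  shows "distributed M lborel Y f"
proof -
  have "distr M lborel Y = distr M lborel X"
    using X Y eq by (intro distr_cong_AE) (auto simp: distributed_def)
  thus ?thesis
    using X Y by (simp add: distributed_def)
qed

lemma AE_PiM_exponential_nonneg: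
  assumes "finite E" "lam > 0"
  shows "AE L in PiM E (\<lambda>e. density lborel (exponential_density lam)). \<forall>e\<in>E. 0 \<le> L e"
proof (rule AE_finite_allI[OF assms(1)])
  fix e
  assume "e \<in> E"
  moreover have "AE x in density lborel (exponential_density lam). 0 \<le> x"
    by (subst AE_density) (auto simp: exponential_density_def intro!: AE_I2)
  ultimately show "AE L in PiM E (\<lambda>e. density lborel (exponential_density lam)). 0 \<le> L e"
    using assms(2) by (intro AE_PiM_component prob_space_exponential_density)
qed

lemma PiM_exponential_Min_components:
  assumes "finite E" "N \<subseteq> E" "N \<noteq> {}" "lam > 0"
  shows "distributed (PiM E (\<lambda>e. density lborel (exponential_density lam))) lborel
           (\<lambda>L. Min (L ` N)) (exponential_density (real (card N) * lam))"
proof -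
  define D where "D = density lborel (exponential_density lam)"
  have D: "prob_space D"
    unfolding D_def using assms(4) by (rule prob_space_exponential_density)
  interpret P: prob_space "PiM E (\<lambda>e. D)"
    by (rule prob_space_PiM) (rule D)
  have "P.indep_vars (\<lambda>e. D) (\<lambda>e L. L e) E"
    using assms D by (intro indep_vars_PiM_components) auto
  hence "P.indep_vars (\<lambda>e. borel) (\<lambda>e L. (\<lambda>x. x) (L e)) E"
    by (rule P.indep_vars_compose2) (simp add: D_def measurable_ident_sets)
  hence "P.indep_vars (\<lambda>e. borel) (\<lambda>e L. L e) N"
    using assms(2) by (rule P.indep_vars_subset)
  moreover have "distributed (PiM E (\<lambda>e. D)) lborel (\<lambda>L. L e) (exponential_density lam)" if "e \<in> N" for e
    unfolding D_def using that assms
    by (intro distributed_PiM_component[where X = "\<lambda>x. x"] distributed_density_id prob_space_exponential_density) auto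
  ultimately have "distributed (PiM E (\<lambda>e. D)) lborel (\<lambda>L. Min ((\<lambda>e. L e) ` N)) (exponential_density (\<Sum>e\<in>N. lam))"
    using assms finite_subset[OF assms(2,1)] by (intro P.exponential_distributed_Min) auto
  thus ?thesis
    by (simp add: D_def)
qed

lemma second_gap_exponential:
  assumes G: "ugraph V E" "v \<in> V" and d: "degree E v \<ge> 1" and lam: "lam > 0"
  shows "distributed (PiM E (\<lambda>e. density lborel (exponential_density lam))) lborel
           (\<lambda>L. second_gap E L v) (exponential_density (real (degree E v) * lam))"
proof -
  define P where "P = PiM E (\<lambda>e. density lborel (exponential_density lam))"
  define N where "N = {e \<in> E. v \<in> e}"
  have finE: "finite E"
    using G(1) by (rule ugraph_finite_edges)
  have cardN: "card N = degree E v"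
    using degree_eq_card_incident[OF G(1)] by (simp add: N_def)
  have "N \<noteq> {}"
    using cardN d by (intro notI) simp
  hence N: "N \<noteq> {}" "N \<subseteq> E"
    by (auto simp: N_def)
  have "(\<lambda>L. second_gap E L v) \<in> borel_measurable P"
    unfolding P_def using G by (rule measurable_second_gap) simp
  moreover have "AE L in P. second_gap E L v = Min (L ` N)"
  proof -
    have "AE L in P. \<forall>e\<in>E. 0 \<le> L e"
      unfolding P_def using finE lam by (rule AE_PiM_exponential_nonneg)
    thus ?thesis
      by eventually_elim (simp add: second_gap_eq_Min_incident[OF G N(1)[unfolded N_def]] N_def)
  qed
  moreover have "distributed P lborel (\<lambda>L. Min (L ` N)) (exponential_density (real (card N) * lam))"
    unfolding P_def using finE N lam by (intro PiM_exponential_Min_components) auto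
  ultimately show ?thesis
    unfolding P_def cardN by (rule distributed_AE_cong)
qed

lemma scaled_total_gap_erlang:
  assumes G: "ugraph V E" "v \<in> V" and d: "degree E v \<ge> 1" and lam: "lam > 0"
  shows "distributed (cascade_space E lam (Suc k)) lborel
           (\<lambda>\<omega>. real (degree E v) * lam * (\<Sum>i<Suc k. second_gap E (\<omega> i) v)) (erlang_density k 1)"
proof -
  define \<mu> where "\<mu> = real (degree E v) * lam"
  define P where "P = PiM E (\<lambda>e. density lborel (exponential_density lam))"
  define Q where "Q = cascade_space E lam (Suc k)"
  have \<mu>: "\<mu> > 0"
    using d lam by (simp add: \<mu>_def)
  have P: "prob_space P"
    unfolding P_def by (intro prob_space_PiM prob_space_exponential_density lam)
  have Q_def': "Q = PiM {..<Suc k} (\<lambda>i. P)"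
    by (simp add: Q_def P_def cascade_space_def)
  interpret Q: prob_space Q
    unfolding Q_def' by (rule prob_space_PiM) (rule P)
  have gap: "distributed P lborel (\<lambda>L. second_gap E L v) (exponential_density \<mu>)"
    unfolding P_def \<mu>_def using G d lam by (rule second_gap_exponential)
  have "Q.indep_vars (\<lambda>i. P) (\<lambda>i \<omega>. \<omega> i) {..<Suc k}"
    unfolding Q_def' using P by (intro indep_vars_PiM_components) auto
  hence "Q.indep_vars (\<lambda>i. borel) (\<lambda>i \<omega>. second_gap E (\<omega> i) v) {..<Suc k}"
    by (rule Q.indep_vars_compose2) (use gap in \<open>simp add: distributed_def\<close>)
  moreover have "distributed Q lborel (\<lambda>\<omega>. second_gap E (\<omega> i) v) (exponential_density \<mu>)"
    if "i \<in> {..<Suc k}" for i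
    unfolding Q_def' using P that gap by (rule distributed_PiM_component)
  ultimately have "distributed Q lborel (\<lambda>\<omega>. \<Sum>i\<in>{..<Suc k}. second_gap E (\<omega> i) v)
      (erlang_density (card {..<Suc k} - 1) \<mu>)"
    using \<mu> by (intro Q.exponential_distributed_sum) auto
  hence "distributed Q lborel (\<lambda>\<omega>. \<Sum>i<Suc k. second_gap E (\<omega> i) v) (erlang_density k \<mu>)"
    by simp
  hence "distributed Q lborel (\<lambda>\<omega>. \<mu> * (\<Sum>i<Suc k. second_gap E (\<omega> i) v)) (erlang_density k (\<mu> / \<mu>))"
    using \<mu> by (intro Q.erlang_distributed_mult_const)
  moreover have "\<mu> / \<mu> = 1"
    using \<mu> by simp
  ultimately show ?thesis
    by (simp only: Q_def \<mu>_def)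
qed

section \<open>Concentration and anti-concentration of the Erlang distribution\<close>

lemma exp_le_inverse_one_minus:
  fixes x :: real
  assumes "x < 1"
  shows "exp x \<le> 1 / (1 - x)"
proof -
  have "1 - x \<le> exp (- x)"
    using exp_ge_add_one_self[of "- x"] by simp
  thus ?thesis
    using assms by (simp add: exp_minus field_simps)
qed

lemma exp_minus_twice_square_le:
  fixes t :: real
  assumes "t \<ge> -1/2"
  shows "exp (t - 2 * t\<^sup>2) \<le> 1 + t"
proof -
  have "1 - (t - 2 * t\<^sup>2) = 2 * (t - 1/4)\<^sup>2 + 7/8"
    by (simp add: power2_eq_square algebra_simps)
  hence lt1: "t - 2 * t\<^sup>2 < 1"
    using zero_le_power2[of "t - 1/4"] by linarith
  have "exp (t - 2 * t\<^sup>2) \<le> 1 / (1 - (t - 2 * t\<^sup>2))"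
    by (rule exp_le_inverse_one_minus[OF lt1])
  also have "\<dots> \<le> 1 + t"
  proof -
    have "(1 + t) * (1 - (t - 2 * t\<^sup>2)) = 1 + t\<^sup>2 * (1 + 2 * t)"
      by (simp add: algebra_simps power2_eq_square)
    moreover have "t\<^sup>2 * (1 + 2 * t) \<ge> 0"
      using assms by simp
    ultimately show ?thesis
      using lt1 by (simp add: field_simps)
  qed
  finally show ?thesis .
qed

lemma inverse_one_minus_le_exp:
  fixes s :: real
  assumes "s \<le> 1/2"
  shows "1 / (1 - s) \<le> exp (s + 2 * s\<^sup>2)"
proof -
  have "exp (- s - 2 * s\<^sup>2) \<le> 1 - s"
    using exp_minus_twice_square_le[of "- s"] assms by simp
  hence "1 / (1 - s) \<le> 1 / exp (- s - 2 * s\<^sup>2)"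
    using assms by (intro divide_left_mono mult_pos_pos) auto
  also have "1 / exp (- s - 2 * s\<^sup>2) = exp (s + 2 * s\<^sup>2)"
  proof -
    have "exp (s + 2 * s\<^sup>2) * exp (- s - 2 * s\<^sup>2) = 1"
      by (simp flip: exp_add)
    thus ?thesis
      by (simp add: field_simps)
  qed
  finally show ?thesis .
qed

lemma nn_integral_erlang_exp:
  fixes s :: real
  assumes "s < 1"
  shows "(\<integral>\<^sup>+x. ennreal (erlang_density k 1 x * exp (s * x)) \<partial>lborel) = ennreal ((1 / (1 - s)) ^ Suc k)"
proof -
  have r: "0 < 1 - s"
    using assms by simp
  have tilt: "erlang_density k 1 x * exp (s * x) = (1 / (1 - s)) ^ Suc k * erlang_density k (1 - s) x" for x
  proof (cases "x < 0")
    case False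
    have "exp (- x) * exp (s * x) = exp (- ((1 - s) * x))"
      by (simp add: algebra_simps flip: exp_add)
    with False r show ?thesis
      by (simp add: erlang_density_def power_divide field_simps)
  qed (simp add: erlang_density_def)
  have "(\<integral>\<^sup>+x. ennreal (erlang_density k 1 x * exp (s * x)) \<partial>lborel)
      = (\<integral>\<^sup>+x. ennreal ((1 / (1 - s)) ^ Suc k) * ennreal (erlang_density k (1 - s) x * x ^ 0) \<partial>lborel)"
    using r by (intro nn_integral_cong) (simp add: tilt ennreal_mult[symmetric])
  also have "\<dots> = ennreal ((1 / (1 - s)) ^ Suc k) * (\<integral>\<^sup>+x. ennreal (erlang_density k (1 - s) x * x ^ 0) \<partial>lborel)"
    by (rule nn_integral_cmult) simp
  also have "(\<integral>\<^sup>+x. ennreal (erlang_density k (1 - s) x * x ^ 0) \<partial>lborel) = 1"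
    using nn_integral_erlang_ith_moment[OF r, of k 0] by simp
  finally show ?thesis
    by simp
qed

text \<open>For \<open>s > 0\<close> the event below is the upper tail \<open>{t..}\<close>, for \<open>s < 0\<close> the lower tail \<open>{..t}\<close>.\<close>

lemma erlang_chernoff:
  fixes s t :: real
  assumes "s < 1"
  shows "measure (density lborel (erlang_density k 1)) {x. s * t \<le> s * x}
           \<le> exp (- s * t) * (1 / (1 - s)) ^ Suc k"
proof -
  let ?D = "density lborel (erlang_density k 1)"
  interpret prob_space ?D
    by (rule prob_space_erlang_density) simp
  have "emeasure ?D {x. s * t \<le> s * x}
      = (\<integral>\<^sup>+x. ennreal (erlang_density k 1 x) * indicator {x. s * t \<le> s * x} x \<partial>lborel)"
    by (simp add: emeasure_density)
  also have "\<dots> \<le> (\<integral>\<^sup>+x. ennreal (exp (- s * t)) * ennreal (erlang_density k 1 x * exp (s * x)) \<partial>lborel)"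
  proof (intro nn_integral_mono)
    fix x :: real
    have "indicator {x. s * t \<le> s * x} x \<le> exp (- s * t) * exp (s * x)"
      by (simp add: indicator_def mult_ac flip: exp_add)
    hence "erlang_density k 1 x * indicator {x. s * t \<le> s * x} x
           \<le> erlang_density k 1 x * (exp (- s * t) * exp (s * x))"
      by (rule mult_left_mono) simp
    hence "erlang_density k 1 x * indicator {x. s * t \<le> s * x} x
           \<le> exp (- s * t) * (erlang_density k 1 x * exp (s * x))"
      by (simp add: mult_ac)
    thus "ennreal (erlang_density k 1 x) * indicator {x. s * t \<le> s * x} x
          \<le> ennreal (exp (- s * t)) * ennreal (erlang_density k 1 x * exp (s * x))"
      by (auto split: split_indicator simp flip: ennreal_mult intro: ennreal_leI)
  qed
  also have "\<dots> = ennreal (exp (- s * t)) * ennreal ((1 / (1 - s)) ^ Suc k)"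
    by (subst nn_integral_cmult) (simp_all add: nn_integral_erlang_exp[OF assms])
  also have "\<dots> = ennreal (exp (- s * t) * (1 / (1 - s)) ^ Suc k)"
    using assms by (intro ennreal_mult[symmetric]) auto
  finally show ?thesis
    using assms by (simp add: emeasure_eq_measure)
qed

lemma erlang_tail_bound:
  fixes s t :: real
  assumes "s \<le> 1/2"
  shows "measure (density lborel (erlang_density k 1)) {x. s * t \<le> s * x}
           \<le> exp (2 * real (Suc k) * s\<^sup>2 - s * (t - real (Suc k)))"
proof -
  have "(1 / (1 - s)) ^ Suc k \<le> exp (s + 2 * s\<^sup>2) ^ Suc k"
    using assms by (intro power_mono inverse_one_minus_le_exp) auto
  also have "\<dots> = exp (real (Suc k) * (s + 2 * s\<^sup>2))"
    by (simp only: exp_of_nat_mult)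
  finally have "exp (- s * t) * (1 / (1 - s)) ^ Suc k \<le> exp (- s * t) * exp (real (Suc k) * (s + 2 * s\<^sup>2))"
    by (rule mult_left_mono) simp
  also have "\<dots> = exp (2 * real (Suc k) * s\<^sup>2 - s * (t - real (Suc k)))"
    by (simp add: algebra_simps flip: exp_add)
  finally show ?thesis
    using erlang_chernoff[where s = s and t = t and k = k] assms by linarith
qed

lemma erlang_concentration:
  fixes a :: real and k :: nat
  assumes "0 \<le> a" "a \<le> 2"
  defines "n \<equiv> real (Suc k)"
  shows "1 - 2 * exp (- n * a\<^sup>2 / 8)
           \<le> measure (density lborel (erlang_density k 1)) {n * (1 - a) <..< n * (1 + a)}"
proof -
  let ?D = "density lborel (erlang_density k 1)"
  interpret prob_space ?D
    by (rule prob_space_erlang_density) simp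
  define s where "s = a / 4"
  have s: "0 \<le> s" "s \<le> 1/2"
    using assms by (auto simp: s_def)
  have "UNIV - {n * (1 - a) <..< n * (1 + a)}
          \<subseteq> {x. s * (n * (1 + a)) \<le> s * x} \<union> {x. - s * (n * (1 - a)) \<le> - s * x}"
  proof
    fix x
    assume "x \<in> UNIV - {n * (1 - a) <..< n * (1 + a)}"
    hence "x \<le> n * (1 - a) \<or> n * (1 + a) \<le> x"
      by auto
    thus "x \<in> {x. s * (n * (1 + a)) \<le> s * x} \<union> {x. - s * (n * (1 - a)) \<le> - s * x}"
      using s(1) by (auto intro: mult_left_mono)
  qed
  hence "prob (UNIV - {n * (1 - a) <..< n * (1 + a)})
          \<le> prob ({x. s * (n * (1 + a)) \<le> s * x} \<union> {x. - s * (n * (1 - a)) \<le> - s * x})"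
    by (intro finite_measure_mono) auto
  also have "\<dots> \<le> prob {x. s * (n * (1 + a)) \<le> s * x} + prob {x. - s * (n * (1 - a)) \<le> - s * x}"
    by (rule measure_Un_le) auto
  also have "\<dots> \<le> exp (- n * a\<^sup>2 / 8) + exp (- n * a\<^sup>2 / 8)"
  proof (intro add_mono)
    have "prob {x. s * (n * (1 + a)) \<le> s * x} \<le> exp (2 * n * s\<^sup>2 - s * (n * (1 + a) - n))"
      unfolding n_def by (rule erlang_tail_bound) (use s in simp)
    also have "\<dots> = exp (- n * a\<^sup>2 / 8)"
      by (simp add: s_def power2_eq_square field_simps)
    finally show "prob {x. s * (n * (1 + a)) \<le> s * x} \<le> exp (- n * a\<^sup>2 / 8)" .
    have "prob {x. - s * (n * (1 - a)) \<le> - s * x} \<le> exp (2 * n * (- s)\<^sup>2 - (- s) * (n * (1 - a) - n))"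
      unfolding n_def by (rule erlang_tail_bound) (use s in simp)
    also have "\<dots> = exp (- n * a\<^sup>2 / 8)"
      by (simp add: s_def power2_eq_square field_simps)
    finally show "prob {x. - s * (n * (1 - a)) \<le> - s * x} \<le> exp (- n * a\<^sup>2 / 8)" .
  qed
  finally show ?thesis
    using prob_compl[of "{n * (1 - a) <..< n * (1 + a)}"] by simp
qed

lemma ln_one_plus_ge:
  fixes x :: real
  assumes "0 \<le> x"
  shows "2 * x / (2 + x) \<le> ln (1 + x)"
proof -
  let ?h = "\<lambda>x::real. ln (1 + x) - 2 * x / (2 + x)"
  have "?h 0 \<le> ?h x"
  proof (rule DERIV_nonneg_imp_nondecreasing[OF assms])
    fix y :: real
    assume y: "0 \<le> y" "y \<le> x"
    have "DERIV ?h y :> 1 / (1 + y) - 4 / (2 + y)\<^sup>2"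
      using y by (auto intro!: derivative_eq_intros simp: power2_eq_square field_simps)
    moreover have "4 / (2 + y)\<^sup>2 \<le> 1 / (1 + y)"
      using y by (simp add: divide_simps power2_eq_square algebra_simps)
    ultimately show "\<exists>d. DERIV ?h y :> d \<and> 0 \<le> d"
      by auto
  qed
  thus ?thesis
    by simp
qed

lemma exp_one_le_one_plus_inverse_power:
  fixes k :: nat
  assumes "k \<ge> 1"
  shows "exp 1 \<le> (1 + 1 / real k) ^ k * sqrt (1 + 1 / real k)"
proof -
  let ?q = "1 + 1 / real k"
  have q: "?q > 0"
    by (simp add: add_pos_nonneg)
  have "1 = (real k + 1/2) * (2 * (1 / real k) / (2 + 1 / real k))"
    using assms by (simp add: field_simps)
  also have "\<dots> \<le> (real k + 1/2) * ln ?q"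
    by (intro mult_left_mono ln_one_plus_ge) auto
  finally have "exp 1 \<le> exp ((real k + 1/2) * ln ?q)"
    by simp
  also have "\<dots> = exp (real k * ln ?q) * exp (ln ?q / 2)"
    by (simp add: algebra_simps flip: exp_add)
  also have "\<dots> = ?q ^ k * sqrt ?q"
    using q by (simp add: exp_of_nat_mult powr_half_sqrt[symmetric] powr_def)
  finally show ?thesis .
qed

lemma fact_mult_exp_le:
  fixes k :: nat
  assumes "k \<ge> 1"
  shows "fact k * exp (real k) \<le> exp 1 * real k ^ k * sqrt (real k)"
  using assms
proof (induction k rule: dec_induct)
  case (step k)
  let ?q = "1 + 1 / real k"
  have qk: "?q * real k = real k + 1"
    using step by (simp add: field_simps)
  have "fact (Suc k) * exp (real (Suc k)) = (real k + 1) * exp 1 * (fact k * exp (real k))"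
    by (simp add: exp_add algebra_simps)
  also have "\<dots> \<le> (real k + 1) * exp 1 * (exp 1 * (real k ^ k * sqrt (real k)))"
    using step.IH by (intro mult_left_mono) (auto simp: mult_ac)
  also have "\<dots> \<le> (real k + 1) * exp 1 * (?q ^ k * sqrt ?q * (real k ^ k * sqrt (real k)))"
    using exp_one_le_one_plus_inverse_power[OF step.hyps(1)]
    by (intro mult_left_mono mult_right_mono) auto
  also have "?q ^ k * sqrt ?q * (real k ^ k * sqrt (real k)) = (?q * real k) ^ k * sqrt (?q * real k)"
    by (simp add: power_mult_distrib real_sqrt_mult mult_ac)
  also have "\<dots> = (real k + 1) ^ k * sqrt (real k + 1)"
    by (simp only: qk)
  finally show ?case
    by (simp add: algebra_simps)
qed simp

lemma erlang_density_ge: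
  fixes k :: nat and y :: real
  assumes k: "k \<ge> 1" and y: "y \<ge> real k / 2"
  shows "exp (- 2 * (y - real k)\<^sup>2 / real k) / (exp 1 * sqrt (real k)) \<le> erlang_density k 1 y"
proof -
  have kpos: "real k > 0"
    using k by simp
  define t where "t = (y - real k) / real k"
  have t: "t \<ge> -1/2" and yk: "y / real k = 1 + t"
    using y kpos by (simp_all add: t_def field_simps)
  have "exp (real k * (t - 2 * t\<^sup>2)) = exp (t - 2 * t\<^sup>2) ^ k"
    by (simp add: exp_of_nat_mult)
  also have "\<dots> \<le> (y / real k) ^ k"
    unfolding yk by (intro power_mono exp_minus_twice_square_le t) simp
  also have "real k * (t - 2 * t\<^sup>2) = (y - real k) - 2 * (y - real k)\<^sup>2 / real k"
    using kpos by (simp add: t_def field_simps power2_eq_square)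
  finally have pow: "exp ((y - real k) - 2 * (y - real k)\<^sup>2 / real k) \<le> (y / real k) ^ k" .
  have "exp (- 2 * (y - real k)\<^sup>2 / real k)
        = exp ((y - real k) - 2 * (y - real k)\<^sup>2 / real k) * exp (real k) * exp (- y)"
    by (simp flip: exp_add)
  also have "\<dots> \<le> (y / real k) ^ k * exp (real k) * exp (- y)"
    using pow by (intro mult_right_mono) auto
  finally have "exp (- 2 * (y - real k)\<^sup>2 / real k) / (exp 1 * sqrt (real k))
        \<le> y ^ k * exp (- y) * exp (real k) / (exp 1 * real k ^ k * sqrt (real k))"
    using kpos by (auto simp: power_divide field_simps intro: divide_right_mono)
  also have "\<dots> \<le> y ^ k * exp (- y) * exp (real k) / (fact k * exp (real k))"
    using fact_mult_exp_le[OF k] y kpos by (intro divide_left_mono mult_pos_pos) auto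
  also have "\<dots> = erlang_density k 1 y"
    using y kpos by (simp add: erlang_density_def)
  finally show ?thesis .
qed

lemma erlang_interval_measure_ge:
  fixes a b m :: real
  assumes "a \<le> b" "0 \<le> m" and dens: "\<And>x. a \<le> x \<Longrightarrow> x \<le> b \<Longrightarrow> m \<le> erlang_density k 1 x"
  shows "(b - a) * m \<le> measure (density lborel (erlang_density k 1)) {a..b}"
proof -
  let ?D = "density lborel (erlang_density k 1)"
  interpret prob_space ?D
    by (rule prob_space_erlang_density) simp
  have "ennreal ((b - a) * m) = (\<integral>\<^sup>+x. ennreal m * indicator {a..b} x \<partial>lborel)"
    using assms by (simp add: nn_integral_cmult ennreal_mult mult.commute)
  also have "\<dots> \<le> (\<integral>\<^sup>+x. ennreal (erlang_density k 1 x) * indicator {a..b} x \<partial>lborel)"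
    by (intro nn_integral_mono) (auto simp: dens ennreal_leI split: split_indicator)
  also have "\<dots> = emeasure ?D {a..b}"
    by (simp add: emeasure_density)
  finally show ?thesis
    by (simp add: emeasure_eq_measure)
qed

lemma erlang_density_near_mode:
  fixes k :: nat and h y :: real
  defines "n \<equiv> real (Suc k)"
  assumes h: "h \<le> n / 2" "h\<^sup>2 \<le> 16 * n" and y: "n - h \<le> y" "y \<le> n"
  shows "exp (- 67) / sqrt n \<le> erlang_density k 1 y"
proof (cases "k = 0")
  case True
  hence "exp (- 67) / sqrt n \<le> exp (- y)"
    using y by (simp add: n_def)
  thus ?thesis
    using True h y by (simp add: n_def erlang_density_def)
next
  case False
  hence kpos: "real k > 0"
    by simp
  have "(y - real k)\<^sup>2 \<le> 1 + h\<^sup>2"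
  proof (cases "y \<ge> real k")
    case True
    hence "(y - real k)\<^sup>2 \<le> 1\<^sup>2"
      using y by (intro power_mono) (auto simp: n_def)
    thus ?thesis
      using zero_le_power2[of h] unfolding power_one by linarith
  next
    case False
    hence "(real k - y)\<^sup>2 \<le> h\<^sup>2"
      using y by (intro power_mono) (auto simp: n_def)
    thus ?thesis
      by (simp add: power2_commute)
  qed
  also have "\<dots> \<le> 33 * real k"
    using h kpos by (simp add: n_def)
  finally have "- 66 \<le> - 2 * (y - real k)\<^sup>2 / real k"
    using kpos by (simp add: field_simps)
  have "exp (- 67) / sqrt n \<le> exp (- 67) / sqrt (real k)"
    using kpos by (intro divide_left_mono) (auto simp: n_def)
  also have "\<dots> = exp (- 66) / (exp 1 * sqrt (real k))"
    by (simp flip: exp_add add: field_simps exp_minus)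
  also have "\<dots> \<le> exp (- 2 * (y - real k)\<^sup>2 / real k) / (exp 1 * sqrt (real k))"
    using \<open>- 66 \<le> _\<close> kpos by (intro divide_right_mono) auto
  also have "\<dots> \<le> erlang_density k 1 y"
    using False h y by (intro erlang_density_ge) (auto simp: n_def)
  finally show ?thesis .
qed

lemma erlang_anticoncentration:
  fixes k :: nat and h :: real
  defines "n \<equiv> real (Suc k)"
  assumes h: "0 \<le> h" "h \<le> n / 2" "h\<^sup>2 \<le> 16 * n"
  shows "h * exp (- 67) / sqrt n \<le> measure (density lborel (erlang_density k 1)) {n - h..n}"
proof -
  have "(n - (n - h)) * (exp (- 67) / sqrt n) \<le> measure (density lborel (erlang_density k 1)) {n - h..n}"
    using h unfolding n_def by (intro erlang_interval_measure_ge erlang_density_near_mode) auto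
  thus ?thesis
    by simp
qed

lemma interval_inner_subset:
  fixes n \<epsilon> :: real
  assumes "0 \<le> n" "0 < \<epsilon>" "\<epsilon> < 1"
  shows "{n * (1 - \<epsilon> / 2) .. n * (1 + \<epsilon> / 2)} \<subseteq> {n / (1 + \<epsilon>) .. n / (1 - \<epsilon>)}"
proof -
  have "\<epsilon> * \<epsilon> \<le> \<epsilon> * 1"
    using assms by (intro mult_left_mono) auto
  hence "n * 1 \<le> n * ((1 - \<epsilon> / 2) * (1 + \<epsilon>))" "n * ((1 + \<epsilon> / 2) * (1 - \<epsilon>)) \<le> n * 1"
    using assms by (intro mult_left_mono; simp add: algebra_simps)+
  hence "n / (1 + \<epsilon>) \<le> n * (1 - \<epsilon> / 2)" "n * (1 + \<epsilon> / 2) \<le> n / (1 - \<epsilon>)"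
    using assms by (simp_all add: pos_divide_le_eq pos_le_divide_eq mult.assoc)
  thus ?thesis
    by auto
qed

lemma erlang_window_prob_large:
  fixes k :: nat and \<epsilon> \<delta> :: real
  defines "n \<equiv> real (Suc k)"
  assumes \<epsilon>: "0 < \<epsilon>" "\<epsilon> < 1" and \<delta>: "0 < \<delta>"
    and large: "64 \<le> n * \<epsilon>\<^sup>2" and n: "ln (1 / \<delta>) \<le> n * \<epsilon>\<^sup>2 / 64"
  shows "1 - \<delta> \<le> measure (density lborel (erlang_density k 1)) {n / (1 + \<epsilon>) .. n / (1 - \<epsilon>)}"
proof -
  interpret prob_space "density lborel (erlang_density k 1)"
    by (rule prob_space_erlang_density) simp
  have "ln 2 \<le> (1::real)"
    using ln_le_minus_one[of 2] by simp
  hence "ln 2 + ln (1 / \<delta>) \<le> n * \<epsilon>\<^sup>2 / 32"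
    using n large by linarith
  have "- n * (\<epsilon> / 2)\<^sup>2 / 8 = - (n * \<epsilon>\<^sup>2 / 32)"
    by (simp add: power_divide)
  hence "2 * exp (- n * (\<epsilon> / 2)\<^sup>2 / 8) = exp (ln 2) * exp (- (n * \<epsilon>\<^sup>2 / 32))"
    by simp
  also have "\<dots> = exp (ln 2 - n * \<epsilon>\<^sup>2 / 32)"
    by (subst exp_diff) (simp add: exp_minus field_simps)
  also have "\<dots> \<le> exp (- ln (1 / \<delta>))"
    using \<open>ln 2 + ln (1 / \<delta>) \<le> _\<close> by simp
  also have "\<dots> = \<delta>"
    using \<delta> by (simp add: ln_div)
  finally have "2 * exp (- n * (\<epsilon> / 2)\<^sup>2 / 8) \<le> \<delta>" .
  moreover have "1 - 2 * exp (- n * (\<epsilon> / 2)\<^sup>2 / 8) \<le> prob {n * (1 - \<epsilon> / 2) <..< n * (1 + \<epsilon> / 2)}"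
    using \<epsilon> unfolding n_def by (intro erlang_concentration) auto
  moreover have "prob {n * (1 - \<epsilon> / 2) <..< n * (1 + \<epsilon> / 2)} \<le> prob {n / (1 + \<epsilon>) .. n / (1 - \<epsilon>)}"
    using interval_inner_subset[of n \<epsilon>] \<epsilon> by (intro finite_measure_mono) (auto simp: n_def)
  ultimately show ?thesis
    by linarith
qed

lemma erlang_window_prob_small:
  fixes k :: nat and \<epsilon> \<delta> :: real
  defines "n \<equiv> real (Suc k)"
  assumes \<epsilon>: "0 < \<epsilon>" "\<epsilon> < 1" and \<delta>: "0 < \<delta>"
    and small: "n * \<epsilon>\<^sup>2 < 64" and n: "ln (1 / \<delta>) \<le> n * \<epsilon>\<^sup>2 / (16 * exp 67)"
  shows "1 - \<delta> \<le> measure (density lborel (erlang_density k 1)) {n / (1 + \<epsilon>) .. n / (1 - \<epsilon>)}"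
proof -
  interpret prob_space "density lborel (erlang_density k 1)"
    by (rule prob_space_erlang_density) simp
  have n1: "n \<ge> 1"
    by (simp add: n_def)
  define r where "r = \<epsilon> * sqrt n"
  have r: "0 < r" "r\<^sup>2 = n * \<epsilon>\<^sup>2"
    using \<epsilon> n1 by (simp_all add: r_def power_mult_distrib)
  have "r \<le> 8"
    by (rule power2_le_imp_le) (use small r in auto)
  have "1 - \<delta> \<le> ln (1 / \<delta>)"
    using ln_le_minus_one[of \<delta>] \<delta> by (simp add: ln_div)
  also have "\<dots> \<le> r * r / (16 * exp 67)"
    using n r by (simp add: power2_eq_square)
  also have "\<dots> \<le> r * 8 / (16 * exp 67)"
    using \<open>r \<le> 8\<close> r by (intro divide_right_mono mult_left_mono) auto
  also have "\<dots> = (\<epsilon> * n / 2) * exp (- 67) / sqrt n"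
  proof -
    have "sqrt n * sqrt n = n"
      using n1 by simp
    thus ?thesis
      using n1 by (simp add: r_def exp_minus field_simps)
  qed
  also have "\<dots> \<le> prob {n - \<epsilon> * n / 2 .. n}"
  proof -
    have "(\<epsilon> * n / 2)\<^sup>2 = (n * \<epsilon>\<^sup>2) * n / 4"
      by (simp add: power2_eq_square)
    also have "\<dots> \<le> 64 * n / 4"
      using small n1 by (intro divide_right_mono mult_right_mono) auto
    finally show ?thesis
      using \<epsilon> n1 unfolding n_def by (intro erlang_anticoncentration) auto
  qed
  also have "\<dots> \<le> prob {n / (1 + \<epsilon>) .. n / (1 - \<epsilon>)}"
  proof -
    have "{n - \<epsilon> * n / 2 .. n} \<subseteq> {n * (1 - \<epsilon> / 2) .. n * (1 + \<epsilon> / 2)}"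
      using \<epsilon> n1 by (auto simp: algebra_simps)
    also have "\<dots> \<subseteq> {n / (1 + \<epsilon>) .. n / (1 - \<epsilon>)}"
      using \<epsilon> n1 by (intro interval_inner_subset) auto
    finally show ?thesis
      by (intro finite_measure_mono) auto
  qed
  finally show ?thesis .
qed

lemma erlang_window_prob:
  fixes k :: nat and \<epsilon> \<delta> :: real
  defines "n \<equiv> real (Suc k)"
  assumes \<epsilon>: "0 < \<epsilon>" "\<epsilon> < 1" and \<delta>: "0 < \<delta>"
    and n: "ln (1 / \<delta>) \<le> n * \<epsilon>\<^sup>2 / (16 * exp 67)"
  shows "1 - \<delta> \<le> measure (density lborel (erlang_density k 1)) {n / (1 + \<epsilon>) .. n / (1 - \<epsilon>)}"
proof (cases "64 \<le> n * \<epsilon>\<^sup>2")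
  case True
  have "exp (67::real) \<ge> 4"
    using exp_ge_add_one_self[of 67] by simp
  hence "n * \<epsilon>\<^sup>2 / (16 * exp 67) \<le> n * \<epsilon>\<^sup>2 / 64"
    by (intro divide_left_mono) (auto simp: n_def)
  hence "ln (1 / \<delta>) \<le> n * \<epsilon>\<^sup>2 / 64"
    using n by linarith
  thus ?thesis
    using erlang_window_prob_large[OF \<epsilon> \<delta>, where k = k, folded n_def] True by blast
next
  case False
  thus ?thesis
    using erlang_window_prob_small[OF \<epsilon> \<delta>, where k = k, folded n_def] n by simp
qed

section \<open>Accuracy of the degree estimate\<close>

lemma relative_error_le_iff:
  fixes S lam \<epsilon> n d :: real
  assumes "d > 0" "lam > 0" "n > 0" "0 < \<epsilon>" "\<epsilon> < 1"
  shows "\<bar>n / (S * lam) - d\<bar> \<le> \<epsilon> * d \<longleftrightarrow> d * lam * S \<in> {n / (1 + \<epsilon>) .. n / (1 - \<epsilon>)}"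
proof (cases "S > 0")
  case True
  define Z where "Z = d * lam * S"
  have Z: "Z > 0"
    using True assms by (simp add: Z_def)
  have "n / (S * lam) - d = d * (n / Z - 1)"
    using True assms by (simp add: Z_def field_simps)
  hence "\<bar>n / (S * lam) - d\<bar> \<le> \<epsilon> * d \<longleftrightarrow> \<bar>n / Z - 1\<bar> \<le> \<epsilon>"
    using assms by (simp add: abs_mult mult.commute)
  also have "\<dots> \<longleftrightarrow> 1 - \<epsilon> \<le> n / Z \<and> n / Z \<le> 1 + \<epsilon>"
    by linarith
  also have "\<dots> \<longleftrightarrow> Z \<in> {n / (1 + \<epsilon>) .. n / (1 - \<epsilon>)}"
    using Z assms by (auto simp: pos_le_divide_eq pos_divide_le_eq mult.commute)
  finally show ?thesis
    by (simp add: Z_def)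
next
  case False
  hence "n / (S * lam) \<le> 0" and "d * lam * S \<le> 0"
    using assms by (simp_all add: divide_nonneg_nonpos mult_nonpos_nonneg mult_nonneg_nonpos)
  moreover have "\<epsilon> * d < d" "n / (1 + \<epsilon>) > 0"
    using assms by simp_all
  ultimately show ?thesis
    by auto
qed

lemma degree_estimate_accuracy_prob:
  fixes k :: nat
  assumes G: "ugraph V E" "v \<in> V" "degree E v \<ge> 1" and lam: "lam > 0" and \<epsilon>: "0 < \<epsilon>" "\<epsilon> < 1"
  defines "Q \<equiv> cascade_space E lam (Suc k)" and "d \<equiv> real (degree E v)" and "n \<equiv> real (Suc k)"
  shows "measure Q {\<omega> \<in> space Q. \<bar>degree_estimate E lam (Suc k) v \<omega> - d\<bar> \<le> \<epsilon> * d}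
           = measure (density lborel (erlang_density k 1)) {n / (1 + \<epsilon>) .. n / (1 - \<epsilon>)}"
proof -
  define Z where "Z = (\<lambda>\<omega>. d * lam * (\<Sum>i<Suc k. second_gap E (\<omega> i) v))"
  let ?W = "{n / (1 + \<epsilon>) .. n / (1 - \<epsilon>)}"
  have Z: "distributed Q lborel Z (erlang_density k 1)"
    unfolding Q_def Z_def d_def using G lam by (rule scaled_total_gap_erlang)
  have "{\<omega> \<in> space Q. \<bar>degree_estimate E lam (Suc k) v \<omega> - d\<bar> \<le> \<epsilon> * d} = Z -` ?W \<inter> space Q"
    using relative_error_le_iff[of d lam n] G \<epsilon> lam
    by (auto simp: Z_def d_def n_def degree_estimate_def)
  hence "measure Q {\<omega> \<in> space Q. \<bar>degree_estimate E lam (Suc k) v \<omega> - d\<bar> \<le> \<epsilon> * d} = measure (distr Q lborel Z) ?W"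
    by (simp only:) (rule measure_distr[symmetric]; use Z in \<open>simp add: distributed_def\<close>)
  also have "distr Q lborel Z = density lborel (erlang_density k 1)"
    using Z by (simp add: distributed_def)
  finally show ?thesis .
qed

theorem theorem2:
  shows "\<exists>C::real. C > 0 \<and>
    (\<forall>(V::nat set) (E::nat set set) (v::nat) (\<epsilon>::real) (\<delta>::real) (lam::real) (l::nat).
       ugraph V E \<and> v \<in> V \<and> degree E v \<ge> 1 \<and>
       0 < \<epsilon> \<and> \<epsilon> < 1 \<and> 0 < \<delta> \<and> \<delta> < 1 \<and> lam > 0 \<and>
       real l \<ge> C * ln (1 / \<delta>) / \<epsilon>\<^sup>2 \<longrightarrow>
       measure (cascade_space E lam l)
         {\<omega> \<in> space (cascade_space E lam l).
            \<bar>degree_estimate E lam l v \<omega> - real (degree E v)\<bar> \<le> \<epsilon> * real (degree E v)}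
       \<ge> 1 - \<delta>)"
proof (intro exI[of _ "16 * exp 67"] conjI allI impI)
  fix V :: "nat set" and E :: "nat set set" and v l :: nat and \<epsilon> \<delta> lam :: real
  assume "ugraph V E \<and> v \<in> V \<and> degree E v \<ge> 1 \<and> 0 < \<epsilon> \<and> \<epsilon> < 1 \<and> 0 < \<delta> \<and> \<delta> < 1 \<and> lam > 0 \<and>
    real l \<ge> 16 * exp 67 * ln (1 / \<delta>) / \<epsilon>\<^sup>2"
  hence G: "ugraph V E" "v \<in> V" "degree E v \<ge> 1" and \<epsilon>: "0 < \<epsilon>" "\<epsilon> < 1"
    and \<delta>: "0 < \<delta>" "\<delta> < 1" and lam: "lam > 0" and l: "16 * exp 67 * ln (1 / \<delta>) / \<epsilon>\<^sup>2 \<le> real l"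
    by auto
  have "0 < 16 * exp 67 * ln (1 / \<delta>) / \<epsilon>\<^sup>2"
    using \<delta> \<epsilon> by simp
  then obtain k where k: "l = Suc k"
    using l gr0_implies_Suc by force
  have "1 - \<delta> \<le> measure (density lborel (erlang_density k 1)) {real l / (1 + \<epsilon>) .. real l / (1 - \<epsilon>)}"
    unfolding k using \<epsilon> \<delta> l by (intro erlang_window_prob) (auto simp: k field_simps)
  thus "1 - \<delta> \<le> measure (cascade_space E lam l)
      {\<omega> \<in> space (cascade_space E lam l).
         \<bar>degree_estimate E lam l v \<omega> - real (degree E v)\<bar> \<le> \<epsilon> * real (degree E v)}"
    unfolding k using degree_estimate_accuracy_prob[OF G lam \<epsilon>] by simp
qed simp

end
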